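(* Let $T$ be a perfect binary tree with $n\ge2$ nodes and nonnegative node weights $(x_v)$, let $1\le k\le n$, $\epsilon>0$, and $\mathrm{OPT}=\min_{\Omega\in\mathbb{T}_k}\sum_{v\notin\Omega}x_v$. Let $W>0$ satisfy $\mathrm{OPT}\le W\le \log_2 n\cdot\mathrm{OPT}$. Define $\hat x_v=\lceil x_v n\log_2 n/(\epsilon W)\rceil$ if $x_v\le W$ and $\hat x_v=\lceil n\log_2 n/\epsilon\rceil+n$ if $x_v>W$. Let $\hat\Omega\in\mathbb{T}_k$ minimize $\sum_{v\notin\Omega}\hat x_v$ over $\Omega\in\mathbb{T}_k$. Then $\sum_{v\notin\hat\Omega}x_v\le(1+\epsilon)\mathrm{OPT}$.
   Context: $\mathbb{T}_k$ denotes the family of node sets $\Omega\subseteq T$ that contain the root, are closed under taking parents, and satisfy $|\Omega|\le k$. *)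

theory Defs
  imports Complex_Main
begin

text \<open>A perfect binary tree with n nodes is represented in heap order:
  nodes are 1..n, the root is 1, the parent of node v > 1 is v div 2,
  and n = 2^(h+1) - 1 for the height h.\<close>

definition perfect_binary_tree_size :: "nat \<Rightarrow> bool" where
  "perfect_binary_tree_size n \<longleftrightarrow> (\<exists>h. n = 2 ^ (h + 1) - 1)"

definition tree_nodes :: "nat \<Rightarrow> nat set" where
  "tree_nodes n = {1..n}"

definition tree_root :: nat where
  "tree_root = 1"

definition tree_parent :: "nat \<Rightarrow> nat" where
  "tree_parent v = v div 2"

definition rooted_subtrees :: "nat \<Rightarrow> nat \<Rightarrow> nat set set" where
  "rooted_subtrees n k = {\<Omega>. \<Omega> \<subseteq> tree_nodes n \<and> tree_root \<in> \<Omega> \<and>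
      (\<forall>v\<in>\<Omega>. v \<noteq> tree_root \<longrightarrow> tree_parent v \<in> \<Omega>) \<and> card \<Omega> \<le> k}"

definition tree_cost :: "nat \<Rightarrow> (nat \<Rightarrow> real) \<Rightarrow> nat set \<Rightarrow> real" where
  "tree_cost n x \<Omega> = (\<Sum>v\<in>tree_nodes n - \<Omega>. x v)"

definition OPT :: "nat \<Rightarrow> nat \<Rightarrow> (nat \<Rightarrow> real) \<Rightarrow> real" where
  "OPT n k x = Min (tree_cost n x ` rooted_subtrees n k)"

definition rounded_weight :: "nat \<Rightarrow> real \<Rightarrow> real \<Rightarrow> (nat \<Rightarrow> real) \<Rightarrow> nat \<Rightarrow> real" where
  "rounded_weight n \<epsilon> W x v =
     (if x v \<le> W then real_of_int \<lceil>x v * real n * log 2 (real n) / (\<epsilon> * W)\<rceil>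
      else real_of_int \<lceil>real n * log 2 (real n) / \<epsilon>\<rceil> + real n)"

end

theory Submission
  imports Defs
begin

text \<open>With the scale c = n log n / (\<epsilon> W), a light weight (x v \<le> W) is rounded to
  \<lceil>c x v\<rceil>, so it gains at most 1, while a heavy one costs at least c W + n.
  An optimal \<Omega>s excludes at most n - 1 nodes, all light (each is at most OPT \<le> W),
  so its rounded cost is below c OPT + n \<le> c W + n; hence the rounded optimum
  \<Omega>h excludes only light nodes, and
  c \<cdot> cost(\<Omega>h) \<le> rounded cost(\<Omega>h) \<le> rounded cost(\<Omega>s) < c OPT + n.
  Dividing by c, the error n / c = \<epsilon> W / log n is at most \<epsilon> OPT.\<close>

definition rounding_scale :: "nat \<Rightarrow> real \<Rightarrow> real \<Rightarrow> real" where
  "rounding_scale n \<epsilon> W = real n * log 2 (real n) / (\<epsilon> * W)"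

lemma rounding_scale_pos:
  assumes "n \<ge> 2" and "\<epsilon> > 0" and "W > 0"
  shows "rounding_scale n \<epsilon> W > 0"
  using assms by (simp add: rounding_scale_def)

lemma rounded_weight_light:
  assumes "x v \<le> W"
  shows "rounded_weight n \<epsilon> W x v = real_of_int \<lceil>rounding_scale n \<epsilon> W * x v\<rceil>"
  using assms by (simp add: rounded_weight_def rounding_scale_def field_simps)

lemma rounded_weight_heavy:
  assumes "\<not> x v \<le> W" and "W \<noteq> 0"
  shows "rounded_weight n \<epsilon> W x v = real_of_int \<lceil>rounding_scale n \<epsilon> W * W\<rceil> + real n"
  using assms by (simp add: rounded_weight_def rounding_scale_def field_simps)

lemma rounded_weight_nonneg:
  assumes "n \<ge> 1" and "\<epsilon> > 0" and "W > 0" and "x v \<ge> 0"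
  shows "rounded_weight n \<epsilon> W x v \<ge> 0"
proof -
  have "log 2 (real n) \<ge> 0" using assms(1) by simp
  then have "x v * real n * log 2 (real n) / (\<epsilon> * W) \<ge> 0" and "real n * log 2 (real n) / \<epsilon> \<ge> 0"
    using assms by simp_all
  then show ?thesis
    unfolding rounded_weight_def by (auto intro: add_nonneg_nonneg)
qed

lemma finite_rooted_subtrees: "finite (rooted_subtrees n k)"
  by (rule finite_subset[of _ "Pow (tree_nodes n)"])
     (auto simp: rooted_subtrees_def tree_nodes_def)

lemma root_singleton_in_rooted_subtrees:
  assumes "n \<ge> 1" and "k \<ge> 1"
  shows "{tree_root} \<in> rooted_subtrees n k"
  using assms by (auto simp: rooted_subtrees_def tree_nodes_def tree_root_def)

lemma OPT_attained:
  assumes "n \<ge> 1" and "k \<ge> 1"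
  obtains \<Omega> where "\<Omega> \<in> rooted_subtrees n k" and "tree_cost n x \<Omega> = OPT n k x"
proof -
  have "OPT n k x \<in> tree_cost n x ` rooted_subtrees n k"
    unfolding OPT_def using finite_rooted_subtrees root_singleton_in_rooted_subtrees[OF assms]
    by (intro Min_in) auto
  then show ?thesis using that by auto
qed

lemma weight_le_tree_cost:
  assumes "\<forall>u\<in>tree_nodes n. x u \<ge> 0" and "v \<in> tree_nodes n - \<Omega>"
  shows "x v \<le> tree_cost n x \<Omega>"
  unfolding tree_cost_def
  by (rule member_le_sum) (use assms in \<open>auto simp: tree_nodes_def\<close>)

lemma card_excluded_nodes_le:
  assumes "\<Omega> \<in> rooted_subtrees n k"
  shows "card (tree_nodes n - \<Omega>) \<le> n - 1"
proof -
  have "tree_root \<in> \<Omega>" using assms by (simp add: rooted_subtrees_def)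
  then have "tree_nodes n - \<Omega> \<subseteq> {2..n}"
    by (auto simp: tree_nodes_def tree_root_def)
       (metis One_nat_def Suc_1 Suc_leI le_neq_implies_less)
  then have "card (tree_nodes n - \<Omega>) \<le> card {2..n}"
    by (intro card_mono) auto
  then show ?thesis by simp
qed

lemma scaled_cost_le_rounded_cost:
  assumes "\<forall>v\<in>tree_nodes n - \<Omega>. x v \<le> W"
  shows "rounding_scale n \<epsilon> W * tree_cost n x \<Omega> \<le> tree_cost n (rounded_weight n \<epsilon> W x) \<Omega>"
  unfolding tree_cost_def sum_distrib_left
  by (rule sum_mono) (use assms in \<open>simp add: rounded_weight_light\<close>)

lemma rounded_cost_le_scaled_cost:
  assumes "\<Omega> \<in> rooted_subtrees n k" and "n \<ge> 1" and "\<forall>v\<in>tree_nodes n - \<Omega>. x v \<le> W"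
  shows "tree_cost n (rounded_weight n \<epsilon> W x) \<Omega>
           \<le> rounding_scale n \<epsilon> W * tree_cost n x \<Omega> + (real n - 1)"
proof -
  let ?c = "rounding_scale n \<epsilon> W"
  have "tree_cost n (rounded_weight n \<epsilon> W x) \<Omega> \<le> (\<Sum>v\<in>tree_nodes n - \<Omega>. ?c * x v + 1)"
    unfolding tree_cost_def
    by (rule sum_mono) (use assms(3) of_int_ceiling_le_add_one in \<open>simp add: rounded_weight_light\<close>)
  also have "\<dots> = ?c * tree_cost n x \<Omega> + real (card (tree_nodes n - \<Omega>))"
    by (simp add: sum.distrib sum_distrib_left tree_cost_def)
  also have "\<dots> \<le> ?c * tree_cost n x \<Omega> + (real n - 1)"
    using card_excluded_nodes_le[OF assms(1)] assms(2) by (simp add: of_nat_diff)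
  finally show ?thesis .
qed

lemma small_rounded_cost_excludes_heavy:
  assumes "n \<ge> 1" and "\<epsilon> > 0" and "W > 0" and "\<forall>u\<in>tree_nodes n. x u \<ge> 0"
    and "tree_cost n (rounded_weight n \<epsilon> W x) \<Omega> < rounding_scale n \<epsilon> W * W + real n"
    and "v \<in> tree_nodes n - \<Omega>"
  shows "x v \<le> W"
proof (rule ccontr)
  assume heavy: "\<not> x v \<le> W"
  have "rounded_weight n \<epsilon> W x v \<le> tree_cost n (rounded_weight n \<epsilon> W x) \<Omega>"
    by (rule weight_le_tree_cost) (use assms rounded_weight_nonneg in auto)
  moreover have "rounding_scale n \<epsilon> W * W + real n \<le> rounded_weight n \<epsilon> W x v"
    using rounded_weight_heavy[of x v W, OF heavy] assms(3) by simp
  ultimately show False using assms(5) by linarith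
qed

theorem lemma13:
  fixes n k :: nat and x :: "nat \<Rightarrow> real" and \<epsilon> W :: real and \<Omega>h :: "nat set"
  assumes "perfect_binary_tree_size n" and "n \<ge> 2"
    and "\<forall>v\<in>tree_nodes n. x v \<ge> 0"
    and "1 \<le> k" and "k \<le> n" and "\<epsilon> > 0"
    and "W > 0" and "OPT n k x \<le> W" and "W \<le> log 2 (real n) * OPT n k x"
    and "\<Omega>h \<in> rooted_subtrees n k"
    and "\<forall>\<Omega>\<in>rooted_subtrees n k.
           tree_cost n (rounded_weight n \<epsilon> W x) \<Omega>h \<le> tree_cost n (rounded_weight n \<epsilon> W x) \<Omega>"
  shows "tree_cost n x \<Omega>h \<le> (1 + \<epsilon>) * OPT n k x"
proof -
  let ?c = "rounding_scale n \<epsilon> W" and ?R = "rounded_weight n \<epsilon> W x"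
  have c_pos: "?c > 0" using rounding_scale_pos assms(2,6,7) .
  obtain \<Omega>s where \<Omega>s: "\<Omega>s \<in> rooted_subtrees n k" "tree_cost n x \<Omega>s = OPT n k x"
    using OPT_attained assms(2,4) by (metis one_le_numeral order_trans)
  have \<Omega>s_light: "\<forall>v\<in>tree_nodes n - \<Omega>s. x v \<le> W"
    using weight_le_tree_cost[OF assms(3)] \<Omega>s(2) assms(8) by fastforce
  have "tree_cost n ?R \<Omega>s \<le> ?c * OPT n k x + (real n - 1)"
    using rounded_cost_le_scaled_cost[OF \<Omega>s(1) _ \<Omega>s_light] assms(2) \<Omega>s(2) by simp
  then have rounded_opt: "tree_cost n ?R \<Omega>h \<le> ?c * OPT n k x + (real n - 1)"
    using assms(11) \<Omega>s(1) by fastforce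
  moreover have "?c * OPT n k x \<le> ?c * W" using assms(8) c_pos by simp
  ultimately have "\<forall>v\<in>tree_nodes n - \<Omega>h. x v \<le> W"
    using small_rounded_cost_excludes_heavy[of n \<epsilon> W x \<Omega>h] assms(2,3,6,7) by simp
  then have "?c * tree_cost n x \<Omega>h \<le> ?c * OPT n k x + real n"
    using scaled_cost_le_rounded_cost[of n \<Omega>h x W \<epsilon>] rounded_opt by linarith
  then have "tree_cost n x \<Omega>h \<le> OPT n k x + real n / ?c"
    using c_pos by (simp add: field_simps)
  also have "real n / ?c = \<epsilon> * W / log 2 (real n)"
    using assms(2) by (simp add: rounding_scale_def field_simps)
  also have "\<dots> \<le> \<epsilon> * OPT n k x"
    using assms(2,6,9) by (simp add: field_simps)
  finally show ?thesis by (simp add: algebra_simps)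
qed

end
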